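(* Let $n,d\ge1$, $p\ge d$, $\Delta\in\mathbb{R}^{nd\times nd}$, $\delta>0$, $Z^{\top}=[I_d,\dots,I_d]\in\mathbb{R}^{d\times nd}$, and let $S\in\mathbb{R}^{nd\times p}$ have blocks $S_i$ with $S_iS_i^{\top}=I_d$. If $d_F(S,Z)\le\delta\sqrt{d/n}\,\|\Delta\|_{\mathrm{op}}$, then \[ n\ge\sigma_{\max}(Z^{\top}S)\ge\sigma_{\min}(Z^{\top}S)\ge n-\frac{\delta^2d\|\Delta\|_{\mathrm{op}}^2}{2n}. \]
   Context: $Z^{\top}S=\sum_jS_j\in\mathbb{R}^{d\times p}$; $\sigma_{\max},\sigma_{\min}$ denote its largest and $d$-th (smallest of the $d$) singular values. $d_F(S,Z)=\min\{(\sum_i\|S_i-Q\|_F^2)^{1/2}:Q\in\mathbb{R}^{d\times p},QQ^{\top}=I_d\}$. *)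

theory Defs
  imports "HOL-Analysis.Analysis"
begin

definition frob :: "real^'p^'d \<Rightarrow> real" where
  "frob M = sqrt (\<Sum>i\<in>UNIV. \<Sum>j\<in>UNIV. (M $ i $ j)\<^sup>2)"

definition sq_singular_values :: "real^'p^'d \<Rightarrow> real set" where
  "sq_singular_values M =
     {e. \<exists>v::real^'d. v \<noteq> 0 \<and> (M ** transpose M) *v v = e *\<^sub>R v}"

definition singular_values :: "real^'p^'d \<Rightarrow> real set" where
  "singular_values M = sqrt ` sq_singular_values M"

definition sigma_max :: "real^'p^'d \<Rightarrow> real" where
  "sigma_max M = Max (singular_values M)"

definition sigma_min :: "real^'p^'d \<Rightarrow> real" where
  "sigma_min M = Min (singular_values M)"

text \<open>d_F(S,Z) for S given by its n blocks S 0, ..., S (n-1).\<close>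
definition dF :: "nat \<Rightarrow> (nat \<Rightarrow> real^'p^'d) \<Rightarrow> real" where
  "dF n S = Inf {sqrt (\<Sum>i<n. (frob (S i - Q))\<^sup>2) | Q. Q ** transpose Q = mat 1}"

end

theory Submission
  imports Defs
begin

text \<open>Write \<open>M = (\<Sum>i<n. S i)\<close>. Every singular value of \<open>M\<close> has the form \<open>norm (v v* M)\<close>
  (that is, \<open>\<parallel>M\<^sup>T v\<parallel>\<close>) for a unit eigenvector \<open>v\<close> of the symmetric matrix \<open>M M\<^sup>T\<close>; such eigenvectors
  exist by maximising the Rayleigh quotient, and there are only finitely many eigenvalues because
  eigenvectors of distinct eigenvalues are orthogonal. Each \<open>S\<^sub>i\<^sup>T v\<close> is a unit vector, so
  \<open>\<parallel>M\<^sup>T v\<parallel> \<le> n\<close>. If \<open>Q\<close> has orthonormal rows, \<open>Q\<^sup>T v\<close> is a unit vector as well, and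
  \<open>2 (n - \<parallel>M\<^sup>T v\<parallel>) \<le> \<Sum>\<^sub>i \<parallel>S\<^sub>i\<^sup>T v - Q\<^sup>T v\<parallel>\<^sup>2 \<le> \<Sum>\<^sub>i \<parallel>S\<^sub>i - Q\<parallel>\<^sub>F\<^sup>2\<close>. Taking the infimum over \<open>Q\<close>
  gives \<open>2 (n - \<parallel>M\<^sup>T v\<parallel>) \<le> d\<^sub>F(S,Z)\<^sup>2 \<le> \<delta>\<^sup>2 d \<parallel>\<Delta>\<parallel>\<^sup>2 / n\<close>.\<close>

lemma frob_eq_norm: "frob M = norm M"
  by (simp add: frob_def norm_vec_def L2_set_def sum_nonneg)

lemma norm_transpose: "norm (transpose A) = norm (A :: real^'n^'m)"
  unfolding frob_eq_norm[symmetric] frob_def transpose_def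
  by (simp add: sum.swap[of _ "UNIV::'n set"])

lemma norm_matrix_vector_mult_le:
  fixes A :: "real^'n^'m"
  shows "norm (A *v x) \<le> norm A * norm x"
proof -
  have "norm (A *v x) = L2_set (\<lambda>i. \<bar>A $ i \<bullet> x\<bar>) UNIV"
    by (simp add: norm_vec_def matrix_vector_mul_component)
  also have "\<dots> \<le> L2_set (\<lambda>i. norm (A $ i) * norm x) UNIV"
    by (rule L2_set_mono) (simp_all add: Cauchy_Schwarz_ineq2)
  also have "\<dots> = norm A * norm x"
    by (simp add: norm_vec_def L2_set_left_distrib)
  finally show ?thesis .
qed

lemma norm_vector_matrix_mult_le:
  fixes A :: "real^'n^'m"
  shows "norm (x v* A) \<le> norm x * norm A"
  using norm_matrix_vector_mult_le[of "transpose A" x] by (simp add: norm_transpose mult.commute)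

lemma vector_matrix_mult_sum:
  fixes A :: "'i \<Rightarrow> real^'n^'m"
  shows "x v* (\<Sum>i\<in>I. A i) = (\<Sum>i\<in>I. x v* A i)"
  by (induction I rule: infinite_finite_induct) (simp_all add: vector_matrix_mult_add_rdistrib)

lemma symmetric_matrix_self_adjoint:
  fixes A :: "real^'n^'n"
  assumes "transpose A = A"
  shows "(A *v x) \<bullet> y = x \<bullet> (A *v y)"
  by (metis assms dot_lmul_matrix vector_transpose_matrix)

abbreviation orthonormal_rows :: "real^'n^'m \<Rightarrow> bool" where
  "orthonormal_rows Q \<equiv> Q ** transpose Q = mat 1"

lemma ex_orthonormal_rows:
  assumes "CARD('m) \<le> CARD('n)"
  shows "\<exists>Q::real^'n^'m. orthonormal_rows Q"
proof -
  obtain f :: "'m \<Rightarrow> 'n" where "inj f"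
    using assms card_le_inj[of "UNIV::'m set" "UNIV::'n set"] by auto
  define Q :: "real^'n^'m" where "Q = (\<chi> i j. if j = f i then 1 else 0)"
  have "(Q ** transpose Q) $ i $ k = mat 1 $ i $ k" for i k
  proof -
    have "(Q ** transpose Q) $ i $ k = (\<Sum>j\<in>UNIV. Q $ i $ j * Q $ k $ j)"
      by (simp add: matrix_matrix_mult_def transpose_def)
    also have "\<dots> = (\<Sum>j\<in>UNIV. if j = f i then (if i = k then 1 else 0) else 0)"
      by (intro sum.cong) (auto simp: Q_def inj_eq[OF \<open>inj f\<close>])
    finally show ?thesis by (simp add: mat_def)
  qed
  then show ?thesis by (auto simp: vec_eq_iff)
qed

lemma norm_vector_matrix_mult_orthonormal_rows:
  fixes Q :: "real^'n^'m"
  assumes "orthonormal_rows Q"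
  shows "norm (x v* Q) = norm x"
proof -
  have "(x v* Q) \<bullet> (x v* Q) = x \<bullet> (Q *v (x v* Q))"
    by (rule dot_lmul_matrix)
  also have "Q *v (x v* Q) = x"
    by (metis assms matrix_vector_mul_assoc matrix_vector_mul_lid transpose_matrix_vector)
  finally show ?thesis by (simp add: norm_eq_sqrt_inner)
qed

lemma self_adjoint_nonneg_null:
  fixes f :: "'a::real_inner \<Rightarrow> 'a"
  assumes "linear f" and adj: "\<And>x y. f x \<bullet> y = x \<bullet> f y"
    and nonneg: "\<And>u. 0 \<le> u \<bullet> f u" and "v \<bullet> f v = 0"
  shows "f v = 0"
proof (rule ccontr)
  assume "f v \<noteq> 0"
  define a where "a = f v \<bullet> f v"
  define c where "c = f v \<bullet> f (f v)"
  \<comment> \<open>the form decreases with slope \<open>-2 a\<close> along \<open>v - t f v\<close>, and this \<open>t\<close> is small enough\<close>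
  define t where "t = a / (c + 1)"
  have "a > 0" "c \<ge> 0" using \<open>f v \<noteq> 0\<close> nonneg by (simp_all add: a_def c_def)
  then have "t > 0" by (simp add: t_def)
  have "(v - t *\<^sub>R f v) \<bullet> f (v - t *\<^sub>R f v) = t * (t * c - 2 * a)"
    using \<open>v \<bullet> f v = 0\<close> adj[of v "f v"]
    by (simp add: linear_diff[OF \<open>linear f\<close>] linear_scale[OF \<open>linear f\<close>]
        inner_commute[of v] a_def c_def algebra_simps power2_eq_square)
  moreover have "t * c < 2 * a"
  proof -
    have "t * c = a * (c / (c + 1))" by (simp add: t_def)
    also have "\<dots> < a * 1" using \<open>a > 0\<close> \<open>c \<ge> 0\<close> by (intro mult_strict_left_mono) simp_all
    finally show ?thesis using \<open>a > 0\<close> by simp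
  qed
  ultimately have "(v - t *\<^sub>R f v) \<bullet> f (v - t *\<^sub>R f v) < 0"
    using \<open>t > 0\<close> by (simp add: mult_pos_neg)
  with nonneg show False by (simp add: not_less[symmetric])
qed

lemma self_adjoint_has_eigenvector:
  fixes f :: "'a::euclidean_space \<Rightarrow> 'a"
  assumes "linear f" and adj: "\<And>x y. f x \<bullet> y = x \<bullet> f y"
  shows "\<exists>e v. v \<noteq> 0 \<and> f v = e *\<^sub>R v"
proof -
  have "continuous_on (sphere 0 1) (\<lambda>u. u \<bullet> f u)"
    using \<open>linear f\<close> by (intro continuous_intros linear_continuous_on linear_conv_bounded_linear[THEN iffD1])
  then obtain v where v: "norm v = 1" and max: "\<And>u. norm u = 1 \<Longrightarrow> u \<bullet> f u \<le> v \<bullet> f v"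
    using continuous_attains_sup[OF compact_sphere, of 0 1 "\<lambda>u. u \<bullet> f u"] by auto
  \<comment> \<open>the maximality of \<open>v\<close> makes \<open>g\<close> positive semidefinite, and \<open>v \<bullet> g v = 0\<close>\<close>
  define e where "e = v \<bullet> f v"
  define g where "g u = e *\<^sub>R u - f u" for u
  have "linear g" unfolding g_def using \<open>linear f\<close> by (intro linear_compose_sub linear_scaleR)
  have "0 \<le> u \<bullet> g u" for u
  proof (cases "u = 0")
    case False
    have "(u /\<^sub>R norm u) \<bullet> f (u /\<^sub>R norm u) \<le> e"
      using max[of "u /\<^sub>R norm u"] False by (simp add: e_def)
    then have "u \<bullet> f u \<le> e * (norm u)\<^sup>2"
      using False by (simp add: linear_scale[OF \<open>linear f\<close>] field_simps power2_eq_square)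
    then show ?thesis by (simp add: g_def power2_norm_eq_inner inner_diff_right)
  qed (simp add: g_def)
  moreover have "v \<bullet> g v = 0"
    using v by (simp add: g_def e_def inner_diff_right norm_eq_1)
  ultimately have "g v = 0"
    using self_adjoint_nonneg_null[OF \<open>linear g\<close>] adj by (simp add: g_def inner_diff_left inner_diff_right inner_commute)
  then have "f v = e *\<^sub>R v" by (simp add: g_def)
  moreover have "v \<noteq> 0" using v by auto
  ultimately show ?thesis by blast
qed

lemma self_adjoint_eigenvalues_finite:
  fixes f :: "'a::euclidean_space \<Rightarrow> 'a"
  assumes adj: "\<And>x y. f x \<bullet> y = x \<bullet> f y"
  shows "finite {e. \<exists>v. v \<noteq> 0 \<and> f v = e *\<^sub>R v}"
proof -
  define E where "E = {e. \<exists>v. v \<noteq> 0 \<and> f v = e *\<^sub>R v}"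
  define eigvec where "eigvec e = (SOME v. v \<noteq> 0 \<and> f v = e *\<^sub>R v)" for e
  have eigvec: "eigvec e \<noteq> 0 \<and> f (eigvec e) = e *\<^sub>R eigvec e" if "e \<in> E" for e
  proof -
    have "\<exists>v. v \<noteq> 0 \<and> f v = e *\<^sub>R v" using that by (simp add: E_def)
    then show ?thesis unfolding eigvec_def by (rule someI_ex)
  qed
  have "inj_on eigvec E"
  proof (rule inj_onI)
    fix a b assume "a \<in> E" "b \<in> E" "eigvec a = eigvec b"
    then have "a *\<^sub>R eigvec a = b *\<^sub>R eigvec a" using eigvec by metis
    then show "a = b" using eigvec[OF \<open>a \<in> E\<close>] by simp
  qed
  moreover have "pairwise orthogonal (eigvec ` E)"
  proof (rule pairwiseI, clarify)
    fix a b assume "a \<in> E" "b \<in> E" "eigvec a \<noteq> eigvec b"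
    have "a * (eigvec a \<bullet> eigvec b) = b * (eigvec a \<bullet> eigvec b)"
      using adj[of "eigvec a" "eigvec b"] eigvec[OF \<open>a \<in> E\<close>] eigvec[OF \<open>b \<in> E\<close>] by simp
    moreover have "a \<noteq> b" using \<open>eigvec a \<noteq> eigvec b\<close> by blast
    ultimately show "orthogonal (eigvec a) (eigvec b)" by (simp add: orthogonal_def)
  qed
  ultimately show ?thesis
    unfolding E_def[symmetric] using pairwise_orthogonal_imp_finite finite_imageD by blast
qed

lemma finite_singular_values: "finite (singular_values M)"
proof -
  have "transpose (M ** transpose M) = M ** transpose M"
    by (simp add: matrix_transpose_mul)
  then have "finite (sq_singular_values M)"
    unfolding sq_singular_values_def
    by (intro self_adjoint_eigenvalues_finite symmetric_matrix_self_adjoint)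
  then show ?thesis by (simp add: singular_values_def)
qed

lemma singular_values_nonempty: "singular_values M \<noteq> {}"
proof -
  have "transpose (M ** transpose M) = M ** transpose M"
    by (simp add: matrix_transpose_mul)
  then have "sq_singular_values M \<noteq> {}"
    using self_adjoint_has_eigenvector[of "\<lambda>v. (M ** transpose M) *v v"]
    by (auto simp: sq_singular_values_def symmetric_matrix_self_adjoint)
  then show ?thesis by (simp add: singular_values_def)
qed

lemma singular_value_attained:
  assumes "s \<in> singular_values M"
  obtains v where "norm v = 1" and "s = norm (v v* M)"
proof -
  obtain e v where "s = sqrt e" "v \<noteq> 0" and ev: "(M ** transpose M) *v v = e *\<^sub>R v"
    using assms by (auto simp: singular_values_def sq_singular_values_def)
  define u where "u = v /\<^sub>R norm v"
  have "norm u = 1" using \<open>v \<noteq> 0\<close> by (simp add: u_def)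
  have "e = e * (u \<bullet> u)" using \<open>norm u = 1\<close> by (simp add: norm_eq_1[symmetric])
  also have "\<dots> = ((M ** transpose M) *v u) \<bullet> u"
    using ev by (simp add: u_def matrix_vector_mult_scaleR inner_commute)
  also have "\<dots> = (u v* M) \<bullet> (u v* M)"
    by (metis dot_lmul_matrix inner_commute matrix_vector_mul_assoc transpose_matrix_vector)
  finally have "s = norm (u v* M)" using \<open>s = sqrt e\<close> by (simp add: norm_eq_sqrt_inner)
  with \<open>norm u = 1\<close> show thesis by (rule that)
qed

lemma sigma_min_le_sigma_max: "sigma_min M \<le> sigma_max M"
  unfolding sigma_min_def sigma_max_def
  using finite_singular_values singular_values_nonempty by (intro Min_le Max_in)

lemma sigma_max_le:
  assumes "\<And>v. norm v = 1 \<Longrightarrow> norm (v v* M) \<le> b"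
  shows "sigma_max M \<le> b"
proof -
  have "sigma_max M \<in> singular_values M"
    unfolding sigma_max_def using finite_singular_values singular_values_nonempty by (rule Max_in)
  then show ?thesis using assms by (metis singular_value_attained)
qed

lemma sigma_min_ge:
  assumes "\<And>v. norm v = 1 \<Longrightarrow> a \<le> norm (v v* M)"
  shows "a \<le> sigma_min M"
proof -
  have "sigma_min M \<in> singular_values M"
    unfolding sigma_min_def using finite_singular_values singular_values_nonempty by (rule Min_in)
  then show ?thesis using assms by (metis singular_value_attained)
qed

lemma norm_vector_matrix_mult_sum_orthonormal_rows_le:
  assumes "\<forall>i<n. orthonormal_rows (S i)"
  shows "norm (v v* (\<Sum>i<n. S i)) \<le> real n * norm v"
proof -
  have "norm (v v* (\<Sum>i<n. S i)) \<le> (\<Sum>i<n. norm (v v* S i))"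
    unfolding vector_matrix_mult_sum by (rule norm_sum)
  also have "\<dots> = real n * norm v"
    using assms by (simp add: norm_vector_matrix_mult_orthonormal_rows)
  finally show ?thesis .
qed

lemma deficit_le_sum_dist_orthonormal_rows:
  assumes "\<forall>i<n. orthonormal_rows (S i)" and "orthonormal_rows Q" and "norm v = 1"
  shows "2 * (real n - norm (v v* (\<Sum>i<n. S i))) \<le> (\<Sum>i<n. (norm (S i - Q))\<^sup>2)"
proof -
  define Y where "Y = v v* Q"
  have "Y \<bullet> Y = 1"
    using assms by (simp add: Y_def norm_vector_matrix_mult_orthonormal_rows flip: norm_eq_1)
  have "2 - 2 * ((v v* S i) \<bullet> Y) \<le> (norm (S i - Q))\<^sup>2" if "i < n" for i
  proof -
    define X where "X = v v* S i"
    have "X \<bullet> X = 1"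
      using assms that by (simp add: X_def norm_vector_matrix_mult_orthonormal_rows flip: norm_eq_1)
    have "(norm (X - Y))\<^sup>2 = X \<bullet> X - 2 * (X \<bullet> Y) + Y \<bullet> Y"
      by (simp add: power2_norm_eq_inner inner_diff_left inner_diff_right inner_commute[of Y X])
    also have "\<dots> = 2 - 2 * (X \<bullet> Y)"
      using \<open>X \<bullet> X = 1\<close> \<open>Y \<bullet> Y = 1\<close> by simp
    finally have "2 - 2 * (X \<bullet> Y) = (norm (v v* (S i - Q)))\<^sup>2"
      by (simp add: X_def Y_def vector_matrix_mult_diff_rdistrib)
    also have "\<dots> \<le> (norm (S i - Q))\<^sup>2"
      using norm_vector_matrix_mult_le[of v "S i - Q"] \<open>norm v = 1\<close> by (simp add: power_mono)
    finally show ?thesis by (simp add: X_def)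
  qed
  then have "(\<Sum>i<n. 2 - 2 * ((v v* S i) \<bullet> Y)) \<le> (\<Sum>i<n. (norm (S i - Q))\<^sup>2)"
    by (intro sum_mono) simp
  moreover have "(\<Sum>i<n. 2 - 2 * ((v v* S i) \<bullet> Y)) = 2 * (real n - (v v* (\<Sum>i<n. S i)) \<bullet> Y)"
    by (simp add: vector_matrix_mult_sum inner_sum_left sum_subtractf sum_distrib_left)
  moreover have "(v v* (\<Sum>i<n. S i)) \<bullet> Y \<le> norm (v v* (\<Sum>i<n. S i))"
    using norm_cauchy_schwarz[of _ Y] \<open>Y \<bullet> Y = 1\<close> by (simp add: norm_eq_1[symmetric])
  ultimately show ?thesis by argo
qed

lemma dF_nonneg:
  fixes S :: "nat \<Rightarrow> real^'p^'d"
  assumes "CARD('d) \<le> CARD('p)"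
  shows "0 \<le> dF n S"
  unfolding dF_def using ex_orthonormal_rows[OF assms]
  by (intro cInf_greatest) (auto simp: sum_nonneg)

lemma le_dF_squared:
  fixes S :: "nat \<Rightarrow> real^'p^'d"
  assumes "CARD('d) \<le> CARD('p)"
    and "\<And>Q. orthonormal_rows Q \<Longrightarrow> c \<le> (\<Sum>i<n. (norm (S i - Q))\<^sup>2)"
  shows "c \<le> (dF n S)\<^sup>2"
proof (cases "c \<le> 0")
  case True
  then show ?thesis by (meson order_trans zero_le_power2)
next
  case False
  have "sqrt c \<le> dF n S"
    unfolding dF_def frob_eq_norm using ex_orthonormal_rows[OF assms(1)] assms(2)
    by (intro cInf_greatest) auto
  then have "(sqrt c)\<^sup>2 \<le> (dF n S)\<^sup>2"
    using False by (intro power_mono) auto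
  then show ?thesis using False by simp
qed

theorem lemma4:
  fixes n :: nat and \<delta> :: real
    and \<Delta> :: "real^'k^'k"
    and S :: "nat \<Rightarrow> real^'p^'d"
  assumes "n \<ge> 1"
    and "CARD('p) \<ge> CARD('d)"
    and "CARD('k) = n * CARD('d)"
    and "\<delta> > 0"
    and "\<forall>i<n. S i ** transpose (S i) = mat 1"
    and "dF n S \<le> \<delta> * sqrt (real CARD('d) / real n) * onorm (\<lambda>x. \<Delta> *v x)"
  shows "real n \<ge> sigma_max (\<Sum>i<n. S i)
    \<and> sigma_max (\<Sum>i<n. S i) \<ge> sigma_min (\<Sum>i<n. S i)
    \<and> sigma_min (\<Sum>i<n. S i) \<ge>
        real n - \<delta>\<^sup>2 * real CARD('d) * (onorm (\<lambda>x. \<Delta> *v x))\<^sup>2 / (2 * real n)"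
proof -
  define D where "D = onorm (\<lambda>x. \<Delta> *v x)"
  have "sigma_max (\<Sum>i<n. S i) \<le> real n"
    by (rule sigma_max_le) (metis assms(5) norm_vector_matrix_mult_sum_orthonormal_rows_le mult_1_right)
  moreover have "real n - \<delta>\<^sup>2 * real CARD('d) * D\<^sup>2 / (2 * real n) \<le> sigma_min (\<Sum>i<n. S i)"
  proof (rule sigma_min_ge)
    fix v :: "real^'d" assume "norm v = 1"
    have "2 * (real n - norm (v v* (\<Sum>i<n. S i))) \<le> (dF n S)\<^sup>2"
      using assms(2,5) \<open>norm v = 1\<close> by (intro le_dF_squared deficit_le_sum_dist_orthonormal_rows)
    also have "\<dots> \<le> (\<delta> * sqrt (real CARD('d) / real n) * D)\<^sup>2"
      using assms(6) dF_nonneg[OF assms(2)] by (simp add: D_def power_mono)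
    also have "\<dots> = \<delta>\<^sup>2 * real CARD('d) * D\<^sup>2 / real n"
      by (simp add: power_mult_distrib)
    finally show "real n - \<delta>\<^sup>2 * real CARD('d) * D\<^sup>2 / (2 * real n) \<le> norm (v v* (\<Sum>i<n. S i))"
      using assms(1) by (simp add: field_simps)
  qed
  ultimately show ?thesis
    using sigma_min_le_sigma_max by (simp add: D_def)
qed

end
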